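(* Let $G$ be a finitely generated group, $(\mathfrak C,D,\mathfrak B)$ a differential category over $\mathbb F$ (where $\mathbb F=\mathbb R$ or $\mathbb C$), and $R$ a representation of $G$ in $\mathfrak C$. Then either (i) $R$ is trivial, or (ii) $D\circ R$ is non-trivial, or (iii) there exists a non-trivial representation of $G$ in $\mathbb F$, i.e. a non-trivial group homomorphism $G\to(\mathbb F,+)$.
   Context: A right linear category over $\mathbb F$ is a category $\mathfrak C$ in which each hom set $\mathfrak C(a,a')$ is an $\mathbb F$-vector space (with zero $0_{a',a}$), such that for every $c\in\mathfrak C(a,a')$ the map $-\circ c:\mathfrak C(a',a'')\to\mathfrak C(a,a'')$ is linear, and $f\circ 0_{a',a}=0_{a'',a}$ for all $f\in\mathfrak C(a',a'')$. A linear category additionally satisfies the dual conditions ($c\circ-$ linear and $0\circ f=0$). A norm on $\mathfrak C$ is a choice of norm on each hom space; it is submultiplicative if $\|1_a\|=1$ and $\|c'\circ c\|\le\|c'\|\|c\|$. A Banach category is a linear category with a submultiplicative norm for which every hom space is complete. A functor between right linear categories is linear if it is linear on each hom space. A $\mathfrak B$-differential on a right linear category $\mathfrak C$ is a linear functor $D:\mathfrak C\to\mathfrak B$ into a Banach category $\mathfrak B$ for which there exists a sequence $(\|\cdot\|_n)_{n\ge1}$ of norms on $\mathfrak C$ (norms on each hom space) with $\limsup_{n\to\infty}\frac{\|c\circ c'-c\circ c''\|_n}{\|c'-c''\|_n}\le\|Dc\|$ for all $c\in\mathfrak C(a',a'')$ and all distinct $c',c''\in\mathfrak C(a,a')$;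 a differential category is such a triple $(\mathfrak C,D,\mathfrak B)$. A representation of the group $G$ in a category $\mathfrak C$ is a functor from $G$ (viewed as a one-object groupoid) to $\mathfrak C$, i.e. a homomorphism $R:G\to\mathfrak C^{-1}(a,a)$ into the group of invertible endomorphisms of some object $a$; it is trivial if it is constant (equal to $1_a$). *)

theory Defs
  imports "HOL-Analysis.Analysis" "HOL-Algebra.Generated_Groups"
begin

text \<open>A (small) category with explicit hom sets, together with linear structure
  on each hom set over a scalar field 'f.  zerom a a', addm a a', scalem a a'
  are the zero, addition and scalar multiplication of the hom space Hom a a'
  (i.e. of C(a,a')).  cmp g f is the composite g o f.\<close>

record ('o, 'm, 'f) lincat =
  Obj    :: "'o set"
  Hom    :: "'o \<Rightarrow> 'o \<Rightarrow> 'm set"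
  cmp    :: "'m \<Rightarrow> 'm \<Rightarrow> 'm"
  idm    :: "'o \<Rightarrow> 'm"
  addm   :: "'o \<Rightarrow> 'o \<Rightarrow> 'm \<Rightarrow> 'm \<Rightarrow> 'm"
  scalem :: "'o \<Rightarrow> 'o \<Rightarrow> 'f \<Rightarrow> 'm \<Rightarrow> 'm"
  zerom  :: "'o \<Rightarrow> 'o \<Rightarrow> 'm"

definition is_category :: "('o, 'm, 'f) lincat \<Rightarrow> bool" where
  "is_category C \<longleftrightarrow>
     (\<forall>a\<in>Obj C. \<forall>a'\<in>Obj C. \<forall>b\<in>Obj C. \<forall>b'\<in>Obj C.
        Hom C a a' \<inter> Hom C b b' \<noteq> {} \<longrightarrow> a = b \<and> a' = b') \<and>
     (\<forall>a\<in>Obj C. idm C a \<in> Hom C a a) \<and>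
     (\<forall>a\<in>Obj C. \<forall>a'\<in>Obj C. \<forall>a''\<in>Obj C. \<forall>f\<in>Hom C a a'. \<forall>g\<in>Hom C a' a''.
        cmp C g f \<in> Hom C a a'') \<and>
     (\<forall>a\<in>Obj C. \<forall>a'\<in>Obj C. \<forall>a''\<in>Obj C. \<forall>a'''\<in>Obj C.
        \<forall>f\<in>Hom C a a'. \<forall>g\<in>Hom C a' a''. \<forall>h\<in>Hom C a'' a'''.
        cmp C h (cmp C g f) = cmp C (cmp C h g) f) \<and>
     (\<forall>a\<in>Obj C. \<forall>a'\<in>Obj C. \<forall>f\<in>Hom C a a'.
        cmp C f (idm C a) = f \<and> cmp C (idm C a') f = f)"

definition vector_space_on ::
  "'m set \<Rightarrow> ('m \<Rightarrow> 'm \<Rightarrow> 'm) \<Rightarrow> ('f::field \<Rightarrow> 'm \<Rightarrow> 'm) \<Rightarrow> 'm \<Rightarrow> bool" where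
  "vector_space_on H add sc z \<longleftrightarrow>
     z \<in> H \<and>
     (\<forall>x\<in>H. \<forall>y\<in>H. add x y \<in> H) \<and>
     (\<forall>k. \<forall>x\<in>H. sc k x \<in> H) \<and>
     (\<forall>x\<in>H. \<forall>y\<in>H. \<forall>w\<in>H. add (add x y) w = add x (add y w)) \<and>
     (\<forall>x\<in>H. \<forall>y\<in>H. add x y = add y x) \<and>
     (\<forall>x\<in>H. add z x = x) \<and>
     (\<forall>x\<in>H. \<exists>y\<in>H. add x y = z) \<and>
     (\<forall>x\<in>H. sc 1 x = x) \<and>
     (\<forall>k l. \<forall>x\<in>H. sc (k * l) x = sc k (sc l x)) \<and>
     (\<forall>k. \<forall>x\<in>H. \<forall>y\<in>H. sc k (add x y) = add (sc k x) (sc k y)) \<and>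
     (\<forall>k l. \<forall>x\<in>H. sc (k + l) x = add (sc k x) (sc l x))"

definition linear_map_on ::
  "'m set \<Rightarrow> ('m \<Rightarrow> 'm \<Rightarrow> 'm) \<Rightarrow> ('f \<Rightarrow> 'm \<Rightarrow> 'm) \<Rightarrow>
   'n set \<Rightarrow> ('n \<Rightarrow> 'n \<Rightarrow> 'n) \<Rightarrow> ('f \<Rightarrow> 'n \<Rightarrow> 'n) \<Rightarrow> ('m \<Rightarrow> 'n) \<Rightarrow> bool" where
  "linear_map_on H1 add1 sc1 H2 add2 sc2 F \<longleftrightarrow>
     (\<forall>x\<in>H1. F x \<in> H2) \<and>
     (\<forall>x\<in>H1. \<forall>y\<in>H1. F (add1 x y) = add2 (F x) (F y)) \<and>
     (\<forall>k. \<forall>x\<in>H1. F (sc1 k x) = sc2 k (F x))"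

definition subm :: "('o, 'm, 'f::field) lincat \<Rightarrow> 'o \<Rightarrow> 'o \<Rightarrow> 'm \<Rightarrow> 'm \<Rightarrow> 'm" where
  "subm C a a' x y = addm C a a' x (scalem C a a' (-1) y)"

definition right_linear_category :: "('o, 'm, 'f::field) lincat \<Rightarrow> bool" where
  "right_linear_category C \<longleftrightarrow>
     is_category C \<and>
     (\<forall>a\<in>Obj C. \<forall>a'\<in>Obj C.
        vector_space_on (Hom C a a') (addm C a a') (scalem C a a') (zerom C a a')) \<and>
     (\<forall>a\<in>Obj C. \<forall>a'\<in>Obj C. \<forall>a''\<in>Obj C. \<forall>c\<in>Hom C a a'.
        linear_map_on (Hom C a' a'') (addm C a' a'') (scalem C a' a'')
                      (Hom C a a'') (addm C a a'') (scalem C a a'') (\<lambda>f. cmp C f c)) \<and>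
     (\<forall>a\<in>Obj C. \<forall>a'\<in>Obj C. \<forall>a''\<in>Obj C. \<forall>f\<in>Hom C a' a''.
        cmp C f (zerom C a a') = zerom C a a'')"

definition linear_category :: "('o, 'm, 'f::field) lincat \<Rightarrow> bool" where
  "linear_category C \<longleftrightarrow>
     right_linear_category C \<and>
     (\<forall>a\<in>Obj C. \<forall>a'\<in>Obj C. \<forall>a''\<in>Obj C. \<forall>c\<in>Hom C a' a''.
        linear_map_on (Hom C a a') (addm C a a') (scalem C a a')
                      (Hom C a a'') (addm C a a'') (scalem C a a'') (\<lambda>f. cmp C c f)) \<and>
     (\<forall>a\<in>Obj C. \<forall>a'\<in>Obj C. \<forall>a''\<in>Obj C. \<forall>f\<in>Hom C a a'.
        cmp C (zerom C a' a'') f = zerom C a a'')"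

definition norm_on ::
  "'m set \<Rightarrow> ('m \<Rightarrow> 'm \<Rightarrow> 'm) \<Rightarrow> ('f::real_normed_field \<Rightarrow> 'm \<Rightarrow> 'm) \<Rightarrow> 'm \<Rightarrow> ('m \<Rightarrow> real) \<Rightarrow> bool" where
  "norm_on H add sc z N \<longleftrightarrow>
     (\<forall>x\<in>H. N x \<ge> 0) \<and>
     (\<forall>x\<in>H. N x = 0 \<longleftrightarrow> x = z) \<and>
     (\<forall>k. \<forall>x\<in>H. N (sc k x) = norm k * N x) \<and>
     (\<forall>x\<in>H. \<forall>y\<in>H. N (add x y) \<le> N x + N y)"

definition banach_category ::
  "('p, 'n, 'f::real_normed_field) lincat \<Rightarrow> ('p \<Rightarrow> 'p \<Rightarrow> 'n \<Rightarrow> real) \<Rightarrow> bool" where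
  "banach_category B N \<longleftrightarrow>
     linear_category B \<and>
     (\<forall>b\<in>Obj B. \<forall>b'\<in>Obj B.
        norm_on (Hom B b b') (addm B b b') (scalem B b b') (zerom B b b') (N b b')) \<and>
     (\<forall>b\<in>Obj B. N b b (idm B b) = 1) \<and>
     (\<forall>b\<in>Obj B. \<forall>b'\<in>Obj B. \<forall>b''\<in>Obj B. \<forall>f\<in>Hom B b b'. \<forall>g\<in>Hom B b' b''.
        N b b'' (cmp B g f) \<le> N b' b'' g * N b b' f) \<and>
     (\<forall>b\<in>Obj B. \<forall>b'\<in>Obj B. \<forall>s::nat \<Rightarrow> 'n.
        (\<forall>n. s n \<in> Hom B b b') \<and>
        (\<forall>e>0. \<exists>K. \<forall>m\<ge>K. \<forall>n\<ge>K. N b b' (subm B b b' (s m) (s n)) < e) \<longrightarrow>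
        (\<exists>x\<in>Hom B b b'. \<forall>e>0. \<exists>K. \<forall>n\<ge>K. N b b' (subm B b b' (s n) x) < e))"

definition linear_functor ::
  "('o, 'm, 'f::field) lincat \<Rightarrow> ('p, 'n, 'f) lincat \<Rightarrow> ('o \<Rightarrow> 'p) \<Rightarrow> ('m \<Rightarrow> 'n) \<Rightarrow> bool" where
  "linear_functor C B Fo Fm \<longleftrightarrow>
     (\<forall>a\<in>Obj C. Fo a \<in> Obj B) \<and>
     (\<forall>a\<in>Obj C. \<forall>a'\<in>Obj C. \<forall>c\<in>Hom C a a'. Fm c \<in> Hom B (Fo a) (Fo a')) \<and>
     (\<forall>a\<in>Obj C. Fm (idm C a) = idm B (Fo a)) \<and>
     (\<forall>a\<in>Obj C. \<forall>a'\<in>Obj C. \<forall>a''\<in>Obj C. \<forall>f\<in>Hom C a a'. \<forall>g\<in>Hom C a' a''.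
        Fm (cmp C g f) = cmp B (Fm g) (Fm f)) \<and>
     (\<forall>a\<in>Obj C. \<forall>a'\<in>Obj C.
        linear_map_on (Hom C a a') (addm C a a') (scalem C a a')
                      (Hom B (Fo a) (Fo a')) (addm B (Fo a) (Fo a')) (scalem B (Fo a) (Fo a')) Fm)"

text \<open>(C, D, B) is a differential category: D = (Do, Dm) is a B-differential
  on the right linear category C, B being a Banach category with norm NB.
  nu n a a' is the n-th norm on C(a,a').\<close>
definition differential_category ::
  "('o, 'm, 'f::real_normed_field) lincat \<Rightarrow> ('o \<Rightarrow> 'p) \<Rightarrow> ('m \<Rightarrow> 'n) \<Rightarrow>
   ('p, 'n, 'f) lincat \<Rightarrow> ('p \<Rightarrow> 'p \<Rightarrow> 'n \<Rightarrow> real) \<Rightarrow> bool" where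
  "differential_category C Do Dm B NB \<longleftrightarrow>
     right_linear_category C \<and> banach_category B NB \<and> linear_functor C B Do Dm \<and>
     (\<exists>nu :: nat \<Rightarrow> 'o \<Rightarrow> 'o \<Rightarrow> 'm \<Rightarrow> real.
        (\<forall>n\<ge>1. \<forall>a\<in>Obj C. \<forall>a'\<in>Obj C.
           norm_on (Hom C a a') (addm C a a') (scalem C a a') (zerom C a a') (nu n a a')) \<and>
        (\<forall>a\<in>Obj C. \<forall>a'\<in>Obj C. \<forall>a''\<in>Obj C. \<forall>c\<in>Hom C a' a''.
           \<forall>c'\<in>Hom C a a'. \<forall>c''\<in>Hom C a a'. c' \<noteq> c'' \<longrightarrow>
             limsup (\<lambda>n. ereal (nu (Suc n) a a'' (subm C a a'' (cmp C c c') (cmp C c c''))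
                                / nu (Suc n) a a' (subm C a a' c' c'')))
               \<le> ereal (NB (Do a') (Do a'') (Dm c))))"

definition finitely_generated_group :: "('g, 'x) monoid_scheme \<Rightarrow> bool" where
  "finitely_generated_group G \<longleftrightarrow>
     group G \<and> (\<exists>S. finite S \<and> S \<subseteq> carrier G \<and> generate G S = carrier G)"

definition representation ::
  "('g, 'x) monoid_scheme \<Rightarrow> ('o, 'm, 'f) lincat \<Rightarrow> 'o \<Rightarrow> ('g \<Rightarrow> 'm) \<Rightarrow> bool" where
  "representation G C a R \<longleftrightarrow>
     a \<in> Obj C \<and>
     (\<forall>g\<in>carrier G. R g \<in> Hom C a a \<and>
        (\<exists>h\<in>Hom C a a. cmp C (R g) h = idm C a \<and> cmp C h (R g) = idm C a)) \<and>
     R \<one>\<^bsub>G\<^esub> = idm C a \<and>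
     (\<forall>x\<in>carrier G. \<forall>y\<in>carrier G. R (x \<otimes>\<^bsub>G\<^esub> y) = cmp C (R x) (R y))"

definition trivial_representation ::
  "('g, 'x) monoid_scheme \<Rightarrow> ('o, 'm, 'f) lincat \<Rightarrow> 'o \<Rightarrow> ('g \<Rightarrow> 'm) \<Rightarrow> bool" where
  "trivial_representation G C a R \<longleftrightarrow> (\<forall>g\<in>carrier G. R g = idm C a)"

end

theory Submission
  imports Defs "HOL-Library.Function_Algebras" "HOL-Algebra.FiniteProduct"
begin

(* Write w g = R g - 1 in the hom space C(a,a). If D o R is trivial then D (w g) = 0, and the
   differential condition for c = w g, c' = R h, c'' = 1 says that the defect
   w (g h) - w h - w g = w g o R h - w g o 1 is eventually below any positive multiple of the n-th
   norm of w h. Measured against M n, the sum of the n-th norms of w s over a finite generating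
   set S, every w g has norm O(M n) and every defect is o(M n).
   Homomorphisms G -> R come from linear functionals on the real functions on G that vanish on
   the relations 1_(gh) - 1_g - 1_h. If there is no nontrivial one, every 1_s lies in the span of
   the relations; transporting this along t |-> sum t x * w x makes every w s, hence M n itself,
   o(M n). So M n = 0 eventually, which forces w = 0, i.e. R trivial. *)

lemma (in vector_space) exists_linear_functional_separating:
  assumes "x \<notin> span E"
  obtains l where "Vector_Spaces.linear scale (*) l" "\<And>v. v \<in> E \<Longrightarrow> l v = 0" "l x = 1"
proof -
  interpret vector_space_pair scale "(*) :: 'a \<Rightarrow> 'a \<Rightarrow> 'a"
    by (intro vector_space_pair.intro vector_space_axioms vector_space_over_itself.vector_space_axioms)
  obtain B where B: "B \<subseteq> E" "independent B" "E \<subseteq> span B"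
    using maximal_independent_subset[of E] by blast
  have x: "x \<notin> span B"
    using assms span_mono[OF B(1)] by blast
  then have "independent (insert x B)"
    using independent_insertI B(2) by blast
  then obtain l where l: "Vector_Spaces.linear scale (*) l"
    "\<forall>v\<in>insert x B. l v = (if v = x then 1 else 0)"
    using linear_independent_extend[of "insert x B" "\<lambda>v. if v = x then 1 else 0"] by blast
  have "l v = 0" if "v \<in> B" for v
    using l(2) that x span_base by fastforce
  then have "l v = 0" if "v \<in> E" for v
    using linear_eq_0_on_span[OF l(1)] B(3) that by blast
  with l show thesis
    using that by simp
qed

interpretation real_fun: vector_space "\<lambda>c (f :: 'a \<Rightarrow> real) x. c * f x"
  by unfold_locales (auto simp: fun_eq_iff algebra_simps)

definition hom_relations :: "('g, 'x) monoid_scheme \<Rightarrow> ('g \<Rightarrow> real) set" where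
  "hom_relations G = {indicator {g \<otimes>\<^bsub>G\<^esub> h} - indicator {g} - indicator {h} | g h.
     g \<in> carrier G \<and> h \<in> carrier G}"

lemma additive_map_if_not_in_span_hom_relations:
  assumes "s \<in> carrier G" "indicator {s} \<notin> real_fun.span (hom_relations G)"
  shows "\<exists>\<psi> :: 'g \<Rightarrow> real. (\<forall>x\<in>carrier G. \<forall>y\<in>carrier G. \<psi> (x \<otimes>\<^bsub>G\<^esub> y) = \<psi> x + \<psi> y)
           \<and> (\<exists>x\<in>carrier G. \<psi> x \<noteq> 0)"
proof -
  obtain l where l: "Vector_Spaces.linear (\<lambda>c (f :: 'g \<Rightarrow> real) x. c * f x) (*) l"
    and l_rel: "\<And>v. v \<in> hom_relations G \<Longrightarrow> l v = 0" and l_s: "l (indicator {s}) = 1"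
    using real_fun.exists_linear_functional_separating[OF assms(2)] by blast
  interpret l: Vector_Spaces.linear "\<lambda>c (f :: 'g \<Rightarrow> real) x. c * f x" "(*)" l
    by (fact l)
  have "l (indicator {x \<otimes>\<^bsub>G\<^esub> y}) = l (indicator {x}) + l (indicator {y})"
    if "x \<in> carrier G" "y \<in> carrier G" for x y
  proof -
    have "l (indicator {x \<otimes>\<^bsub>G\<^esub> y} - indicator {x} - indicator {y}) = 0"
      using that by (intro l_rel) (auto simp: hom_relations_def)
    then show ?thesis
      by (simp add: l.diff)
  qed
  then show ?thesis
    using assms(1) l_s by (intro exI[of _ "\<lambda>x. l (indicator {x})"]) force
qed

locale carrier_vector_space =
  fixes H :: "'m set" and add :: "'m \<Rightarrow> 'm \<Rightarrow> 'm" and sc :: "'f::field \<Rightarrow> 'm \<Rightarrow> 'm" and z :: 'm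
  assumes zero_closed: "z \<in> H"
    and add_closed: "x \<in> H \<Longrightarrow> y \<in> H \<Longrightarrow> add x y \<in> H"
    and scale_closed: "x \<in> H \<Longrightarrow> sc k x \<in> H"
    and add_assoc: "x \<in> H \<Longrightarrow> y \<in> H \<Longrightarrow> u \<in> H \<Longrightarrow> add (add x y) u = add x (add y u)"
    and add_commute: "x \<in> H \<Longrightarrow> y \<in> H \<Longrightarrow> add x y = add y x"
    and add_zero_left: "x \<in> H \<Longrightarrow> add z x = x"
    and add_inverse_ex: "x \<in> H \<Longrightarrow> \<exists>y\<in>H. add x y = z"
    and scale_one: "x \<in> H \<Longrightarrow> sc 1 x = x"
    and scale_scale: "x \<in> H \<Longrightarrow> sc (k * l) x = sc k (sc l x)"
    and scale_add_right: "x \<in> H \<Longrightarrow> y \<in> H \<Longrightarrow> sc k (add x y) = add (sc k x) (sc k y)"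
    and scale_add_left: "x \<in> H \<Longrightarrow> sc (k + l) x = add (sc k x) (sc l x)"

lemma carrier_vector_space_iff: "carrier_vector_space H add sc z \<longleftrightarrow> vector_space_on H add sc z"
  unfolding carrier_vector_space_def vector_space_on_def
  by (simp only: Ball_def conj_assoc) meson

context carrier_vector_space
begin

abbreviation diff :: "'m \<Rightarrow> 'm \<Rightarrow> 'm" where
  "diff x y \<equiv> add x (sc (-1) y)"

definition add_group :: "'m monoid" where
  "add_group = \<lparr>carrier = H, mult = add, one = z\<rparr>"

lemma add_group_simps [simp]:
  "carrier add_group = H" "mult add_group = add" "one add_group = z"
  by (simp_all add: add_group_def)

lemma diff_closed: "x \<in> H \<Longrightarrow> y \<in> H \<Longrightarrow> diff x y \<in> H"
  by (simp add: add_closed scale_closed)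

sublocale A: comm_group add_group
proof (rule comm_groupI)
  fix x
  assume "x \<in> carrier add_group"
  then show "\<exists>y\<in>carrier add_group. y \<otimes>\<^bsub>add_group\<^esub> x = \<one>\<^bsub>add_group\<^esub>"
    using add_inverse_ex add_commute by fastforce
qed (auto intro: add_commute simp: add_closed zero_closed add_assoc add_zero_left)

lemmas add_group_laws =
  A.m_assoc[unfolded add_group_simps] A.m_comm[unfolded add_group_simps]
  A.m_lcomm[unfolded add_group_simps] A.inv_mult[unfolded add_group_simps]
  A.inv_inv[unfolded add_group_simps] A.l_inv[unfolded add_group_simps]
  A.r_inv[unfolded add_group_simps] A.r_one[unfolded add_group_simps]
  A.inv_closed[unfolded add_group_simps]

lemmas finprod_closed = A.finprod_closed[unfolded add_group_simps]
lemmas finprod_add = A.finprod_multf[unfolded add_group_simps]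

lemma scale_zero_left: "x \<in> H \<Longrightarrow> sc 0 x = z"
  using A.l_cancel_one'[of "sc 0 x" "sc 0 x"] scale_add_left[of x 0 0] scale_closed by simp

lemma scale_zero_right: "sc k z = z"
  using A.l_cancel_one'[of "sc k z" "sc k z"] scale_add_right[of z z k] zero_closed scale_closed
    add_zero_left by simp

lemma scale_minus_one: "x \<in> H \<Longrightarrow> sc (-1) x = inv\<^bsub>add_group\<^esub> x"
  using A.inv_equality[of "sc (-1) x" x] scale_add_left[of x "-1" 1] scale_one
    scale_zero_left scale_closed by simp

lemma diff_self: "x \<in> H \<Longrightarrow> diff x x = z"
  using A.r_inv by (simp add: scale_minus_one)

lemma diff_add_cancel: "x \<in> H \<Longrightarrow> y \<in> H \<Longrightarrow> add (diff x y) y = x"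
  by (simp add: scale_minus_one add_group_laws add_closed)

lemma diff_eq_zero_iff: "x \<in> H \<Longrightarrow> y \<in> H \<Longrightarrow> diff x y = z \<longleftrightarrow> x = y"
  using diff_add_cancel diff_self add_zero_left by metis

lemma minus_diff:
  assumes "x \<in> H" "y \<in> H"
  shows "sc (-1) (diff x y) = diff y x"
proof -
  have "sc (-1) (diff x y) = add (sc (-1) x) (sc (-1) (sc (-1) y))"
    using assms by (simp add: scale_add_right scale_closed)
  also have "sc (-1) (sc (-1) y) = y"
    using assms scale_scale[of y "-1" "-1"] by (simp add: scale_one)
  also have "add (sc (-1) x) y = diff y x"
    using assms by (intro add_commute scale_closed)
  finally show ?thesis .
qed

lemma diff_diff_diff_cancel:
  assumes "x \<in> H" "y \<in> H" "u \<in> H"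
  shows "diff (diff x u) (diff y u) = diff x y"
proof -
  have "diff (diff x u) (diff y u) = add x (add (diff z u) (diff u y))"
    using assms add_assoc[of x "sc (-1) u" "diff u y"] add_zero_left[of "sc (-1) u"]
    by (simp add: minus_diff scale_closed add_closed zero_closed)
  also have "add (diff z u) (diff u y) = sc (-1) y"
    using assms add_assoc[of "diff z u" u "sc (-1) y"] diff_self[of u] add_commute[of u "sc (-1) u"]
    by (simp add: add_zero_left zero_closed scale_closed)
  finally show ?thesis .
qed

lemma diff_diff_right_cancel: "x \<in> H \<Longrightarrow> u \<in> H \<Longrightarrow> diff x (diff x u) = u"
  by (simp add: scale_minus_one add_group_laws add_closed)

lemma scale_finprod:
  "finite I \<Longrightarrow> f \<in> I \<rightarrow> H \<Longrightarrow> sc k (finprod add_group f I) = finprod add_group (\<lambda>i. sc k (f i)) I"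
proof (induction I rule: finite_induct)
  case empty
  then show ?case
    by (simp add: scale_zero_right)
next
  case (insert i I)
  then have "(\<lambda>i. sc k (f i)) \<in> I \<rightarrow> H" "finprod add_group f I \<in> H"
    using finprod_closed[of f I] by (simp_all add: Pi_iff scale_closed)
  with insert show ?case
    by (simp add: A.finprod_insert scale_add_right scale_closed Pi_iff)
qed

end

locale carrier_normed_space = carrier_vector_space H add sc z
  for H :: "'m set" and add and sc :: "'f::real_normed_field \<Rightarrow> 'm \<Rightarrow> 'm" and z +
  fixes N :: "'m \<Rightarrow> real"
  assumes norm: "norm_on H add sc z N"
begin

lemma norm_nonneg: "x \<in> H \<Longrightarrow> N x \<ge> 0"
  and norm_eq_zero_iff: "x \<in> H \<Longrightarrow> N x = 0 \<longleftrightarrow> x = z"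
  and norm_scale: "x \<in> H \<Longrightarrow> N (sc k x) = norm k * N x"
  and norm_add_le: "x \<in> H \<Longrightarrow> y \<in> H \<Longrightarrow> N (add x y) \<le> N x + N y"
  using norm unfolding norm_on_def by auto

lemma norm_zero: "N z = 0"
  using norm_eq_zero_iff zero_closed by blast

lemma norm_pos: "x \<in> H \<Longrightarrow> x \<noteq> z \<Longrightarrow> N x > 0"
  using norm_nonneg norm_eq_zero_iff by force

lemma norm_diff_le: "x \<in> H \<Longrightarrow> y \<in> H \<Longrightarrow> N (diff x y) \<le> N x + N y"
  using norm_add_le[of x "sc (-1) y"] norm_scale[of y "-1"] scale_closed by simp

lemma norm_le_diff_diff_left:
  assumes "x \<in> H" "y \<in> H" "u \<in> H"
  shows "N x \<le> N (diff (diff x y) u) + N u + N y"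
proof -
  have "N x \<le> N (add (diff (diff x y) u) u) + N y"
    using assms norm_add_le[of "add (diff (diff x y) u) u" y]
    by (simp add: diff_add_cancel diff_closed add_closed)
  also have "N (add (diff (diff x y) u) u) \<le> N (diff (diff x y) u) + N u"
    using assms by (simp add: norm_add_le diff_closed)
  finally show ?thesis
    by simp
qed

lemma norm_le_diff_diff_right:
  assumes "x \<in> H" "y \<in> H" "u \<in> H"
  shows "N u \<le> N (diff (diff x y) u) + N x + N y"
proof -
  have "N u = N (diff (diff x y) (diff (diff x y) u))"
    using assms by (simp add: diff_diff_right_cancel diff_closed)
  also have "\<dots> \<le> N x + N y + N (diff (diff x y) u)"
    using assms norm_diff_le[of "diff x y" "diff (diff x y) u"] norm_diff_le[of x y]
    by (simp add: diff_closed)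
  finally show ?thesis
    by simp
qed

end


locale asymptotically_additive = carrier_vector_space H add sc z
  for H :: "'m set" and add and sc :: "'f::real_normed_field \<Rightarrow> 'm \<Rightarrow> 'm" and z +
  fixes N :: "nat \<Rightarrow> 'm \<Rightarrow> real"
    and G :: "('g, 'x) monoid_scheme" and S :: "'g set" and w :: "'g \<Rightarrow> 'm"
  assumes norms: "\<And>n. norm_on H add sc z (N n)"
    and group: "group G"
    and finite_generators: "finite S"
    and generate_generators: "generate G S = carrier G"
    and w_closed: "g \<in> carrier G \<Longrightarrow> w g \<in> H"
    and defect_small: "g \<in> carrier G \<Longrightarrow> h \<in> carrier G \<Longrightarrow> \<epsilon> > 0 \<Longrightarrow>
      \<forall>\<^sub>F n in sequentially. N n (diff (diff (w (g \<otimes>\<^bsub>G\<^esub> h)) (w h)) (w g)) \<le> \<epsilon> * N n (w h)"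
begin

sublocale normed: carrier_normed_space H add sc z "N n" for n
  by (rule carrier_normed_space.intro[OF carrier_vector_space_axioms])
    (simp add: carrier_normed_space_axioms_def norms)

interpretation G: group G
  by (fact group)

abbreviation defect :: "'g \<Rightarrow> 'g \<Rightarrow> 'm" where
  "defect g h \<equiv> diff (diff (w (g \<otimes>\<^bsub>G\<^esub> h)) (w h)) (w g)"

lemma generators_closed: "S \<subseteq> carrier G"
  unfolding generate_generators[symmetric] by (auto intro: generate.incl)

lemma w_one: "w \<one>\<^bsub>G\<^esub> = z"
proof -
  let ?e = "w \<one>\<^bsub>G\<^esub>"
  have e: "?e \<in> H"
    by (simp add: w_closed)
  obtain n where "N n (defect \<one>\<^bsub>G\<^esub> \<one>\<^bsub>G\<^esub>) \<le> 1/2 * N n ?e"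
    using eventually_happens'[OF sequentially_bot defect_small[of "\<one>\<^bsub>G\<^esub>" "\<one>\<^bsub>G\<^esub>" "1/2"]]
    by auto
  moreover have "defect \<one>\<^bsub>G\<^esub> \<one>\<^bsub>G\<^esub> = sc (-1) ?e"
    using e by (simp add: diff_self add_zero_left scale_closed)
  ultimately have "N n ?e \<le> 0"
    using e normed.norm_scale[of ?e n "-1"] by simp
  then show ?thesis
    using e normed.norm_nonneg[of ?e n] normed.norm_eq_zero_iff[of ?e n] by simp
qed

definition generator_size :: "nat \<Rightarrow> real" where
  "generator_size n = (\<Sum>s\<in>S. N n (w s))"

lemma generator_size_nonneg: "generator_size n \<ge> 0"
  unfolding generator_size_def
  using generators_closed w_closed normed.norm_nonneg by (intro sum_nonneg) blast

lemma norm_generator_le_size: "s \<in> S \<Longrightarrow> N n (w s) \<le> generator_size n"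
  unfolding generator_size_def
  using finite_generators generators_closed w_closed normed.norm_nonneg
  by (intro member_le_sum) blast+

lemma eventually_norm_le_generator_size:
  assumes "g \<in> carrier G"
  shows "\<exists>K\<ge>0. \<forall>\<^sub>F n in sequentially. N n (w g) \<le> K * generator_size n"
  using assms unfolding generate_generators[symmetric]
proof (induction rule: generate.induct)
  case one
  show ?case
    by (intro exI[of _ 0]) (simp add: w_one normed.norm_zero)
next
  case (incl s)
  then show ?case
    by (intro exI[of _ 1]) (simp add: norm_generator_le_size)
next
  case (inv s)
  then have s: "s \<in> carrier G" "inv\<^bsub>G\<^esub> s \<in> carrier G"
    using generators_closed by auto
  have "\<forall>\<^sub>F n in sequentially. N n (w (inv\<^bsub>G\<^esub> s)) \<le> 2 * generator_size n"
    using defect_small[OF s(2,1) zero_less_one]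
  proof eventually_elim
    case (elim n)
    have "N n (w (inv\<^bsub>G\<^esub> s)) \<le> N n (defect (inv\<^bsub>G\<^esub> s) s) + N n z + N n (w s)"
      using normed.norm_le_diff_diff_right[of z "w s" "w (inv\<^bsub>G\<^esub> s)" n] s w_one
      by (simp add: zero_closed w_closed)
    also have "\<dots> \<le> 2 * N n (w s)"
      using elim by (simp add: normed.norm_zero)
    finally show ?case
      using norm_generator_le_size[OF inv, of n] by simp
  qed
  then show ?case
    by (intro exI[of _ 2]) simp
next
  case (eng g h)
  then have gh: "g \<in> carrier G" "h \<in> carrier G"
    by (simp_all add: generate_generators)
  obtain K1 K2 where K: "K1 \<ge> 0" "K2 \<ge> 0"
    and g_le: "\<forall>\<^sub>F n in sequentially. N n (w g) \<le> K1 * generator_size n"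
    and h_le: "\<forall>\<^sub>F n in sequentially. N n (w h) \<le> K2 * generator_size n"
    using eng.IH by blast
  have "\<forall>\<^sub>F n in sequentially. N n (w (g \<otimes>\<^bsub>G\<^esub> h)) \<le> (K1 + 2 * K2) * generator_size n"
    using g_le h_le defect_small[OF gh zero_less_one]
  proof eventually_elim
    case (elim n)
    have "N n (w (g \<otimes>\<^bsub>G\<^esub> h)) \<le> N n (defect g h) + N n (w g) + N n (w h)"
      using normed.norm_le_diff_diff_left gh w_closed by simp
    also have "\<dots> \<le> K1 * generator_size n + 2 * (K2 * generator_size n)"
      using elim by simp
    finally show ?case
      by (simp add: algebra_simps)
  qed
  with K show ?case
    by (intro exI[of _ "K1 + 2 * K2"]) simp
qed

definition negligible :: "'m \<Rightarrow> bool" where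
  "negligible v \<longleftrightarrow> (\<forall>\<epsilon>>0. \<forall>\<^sub>F n in sequentially. N n v \<le> \<epsilon> * generator_size n)"

lemma negligible_defect:
  assumes "g \<in> carrier G" "h \<in> carrier G"
  shows "negligible (defect g h)"
  unfolding negligible_def
proof (intro allI impI)
  fix \<epsilon> :: real
  assume "\<epsilon> > 0"
  obtain K where "K \<ge> 0" and K: "\<forall>\<^sub>F n in sequentially. N n (w h) \<le> K * generator_size n"
    using eventually_norm_le_generator_size assms(2) by blast
  then have "\<epsilon> / (K + 1) > 0" "\<epsilon> / (K + 1) * K \<le> \<epsilon>"
    using \<open>\<epsilon> > 0\<close> by (simp_all add: field_simps)
  show "\<forall>\<^sub>F n in sequentially. N n (defect g h) \<le> \<epsilon> * generator_size n"
    using defect_small[OF assms \<open>\<epsilon> / (K + 1) > 0\<close>] K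
  proof eventually_elim
    case (elim n)
    have "N n (defect g h) \<le> \<epsilon> / (K + 1) * (K * generator_size n)"
      using elim \<open>\<epsilon> / (K + 1) > 0\<close> by (meson less_imp_le mult_left_mono order.trans)
    also have "\<dots> = \<epsilon> / (K + 1) * K * generator_size n"
      by (simp only: mult.assoc)
    also have "\<dots> \<le> \<epsilon> * generator_size n"
      using \<open>\<epsilon> / (K + 1) * K \<le> \<epsilon>\<close> generator_size_nonneg by (rule mult_right_mono)
    finally show ?case .
  qed
qed

lemma negligible_zero: "negligible z"
  unfolding negligible_def by (simp add: normed.norm_zero generator_size_nonneg)

lemma negligible_combine:
  assumes "x \<in> H" "y \<in> H" "negligible x" "negligible y"
  shows "negligible (add (sc (of_real c) x) y)"
  unfolding negligible_def
proof (intro allI impI)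
  fix \<epsilon> :: real
  assume "\<epsilon> > 0"
  define \<delta> where "\<delta> = \<epsilon> / (2 * (\<bar>c\<bar> + 1))"
  have "\<delta> > 0" "\<epsilon> / 2 > 0" "\<bar>c\<bar> * \<delta> \<le> \<epsilon> / 2"
    using \<open>\<epsilon> > 0\<close> by (simp_all add: \<delta>_def field_simps)
  have "\<forall>\<^sub>F n in sequentially. N n x \<le> \<delta> * generator_size n"
    "\<forall>\<^sub>F n in sequentially. N n y \<le> \<epsilon> / 2 * generator_size n"
    using assms(3,4) \<open>\<delta> > 0\<close> \<open>\<epsilon> / 2 > 0\<close> unfolding negligible_def by blast+
  then show "\<forall>\<^sub>F n in sequentially. N n (add (sc (of_real c) x) y) \<le> \<epsilon> * generator_size n"
  proof eventually_elim
    case (elim n)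
    have "N n (add (sc (of_real c) x) y) \<le> \<bar>c\<bar> * N n x + N n y"
      using assms normed.norm_add_le[of "sc (of_real c) x" y n] normed.norm_scale[of x n]
      by (simp add: scale_closed)
    also have "\<dots> \<le> \<bar>c\<bar> * (\<delta> * generator_size n) + \<epsilon> / 2 * generator_size n"
      using elim by (intro add_mono mult_left_mono) auto
    also have "\<bar>c\<bar> * (\<delta> * generator_size n) \<le> \<epsilon> / 2 * generator_size n"
      unfolding mult.assoc[symmetric]
      using \<open>\<bar>c\<bar> * \<delta> \<le> \<epsilon> / 2\<close> generator_size_nonneg by (rule mult_right_mono)
    finally show ?case
      by simp
  qed
qed

definition finitely_supported :: "('g \<Rightarrow> real) \<Rightarrow> bool" where
  "finitely_supported t \<longleftrightarrow> finite {x. t x \<noteq> 0} \<and> {x. t x \<noteq> 0} \<subseteq> carrier G"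

definition lincomb :: "('g \<Rightarrow> real) \<Rightarrow> 'm" where
  "lincomb t = finprod add_group (\<lambda>x. sc (of_real (t x)) (w x)) {x. t x \<noteq> 0}"

lemma lincomb_summands_closed: "A \<subseteq> carrier G \<Longrightarrow> (\<lambda>x. sc (of_real (t x)) (w x)) \<in> A \<rightarrow> H"
  using w_closed scale_closed by blast

lemma lincomb_closed: "finitely_supported t \<Longrightarrow> lincomb t \<in> H"
  unfolding lincomb_def finitely_supported_def
  using finprod_closed[OF lincomb_summands_closed] by simp

lemma lincomb_eq_finprod:
  assumes "finite A" "{x. t x \<noteq> 0} \<subseteq> A" "A \<subseteq> carrier G"
  shows "lincomb t = finprod add_group (\<lambda>x. sc (of_real (t x)) (w x)) A"
  unfolding lincomb_def
  using assms lincomb_summands_closed[OF assms(3)] w_closed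
  by (intro A.finprod_mono_neutral_cong_left) (auto simp: scale_zero_left)

lemma finitely_supported_combine:
  assumes "finitely_supported u" "finitely_supported v"
  shows "finitely_supported (\<lambda>x. c * u x + v x)"
proof -
  have "{x. c * u x + v x \<noteq> 0} \<subseteq> {x. u x \<noteq> 0} \<union> {x. v x \<noteq> 0}"
    by auto
  with assms show ?thesis
    unfolding finitely_supported_def by (meson finite_UnI finite_subset le_sup_iff order.trans)
qed

lemma lincomb_combine:
  assumes "finitely_supported u" "finitely_supported v"
  shows "lincomb (\<lambda>x. c * u x + v x) = add (sc (of_real c) (lincomb u)) (lincomb v)"
proof -
  define A where "A = {x. u x \<noteq> 0} \<union> {x. v x \<noteq> 0}"
  have A: "finite A" "A \<subseteq> carrier G"
    using assms unfolding A_def finitely_supported_def by auto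
  then have wA: "x \<in> A \<Longrightarrow> w x \<in> H" for x
    using w_closed by blast
  let ?f = "\<lambda>t x. sc (of_real (t x)) (w x)"
  have "lincomb (\<lambda>x. c * u x + v x) = finprod add_group (\<lambda>x. add (sc (of_real c) (?f u x)) (?f v x)) A"
    using A wA
    by (subst lincomb_eq_finprod[OF A(1) _ A(2)])
      (auto simp: A_def scale_scale scale_add_left add_closed scale_closed intro!: A.finprod_cong')
  also have "\<dots> = add (sc (of_real c) (finprod add_group (?f u) A)) (finprod add_group (?f v) A)"
    using A wA lincomb_summands_closed[OF A(2)]
    by (subst finprod_add) (auto simp: scale_finprod scale_closed)
  also have "\<dots> = add (sc (of_real c) (lincomb u)) (lincomb v)"
    using lincomb_eq_finprod[OF A(1) _ A(2), of u] lincomb_eq_finprod[OF A(1) _ A(2), of v]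
    by (simp add: A_def)
  finally show ?thesis .
qed

lemma lincomb_diff:
  assumes "finitely_supported u" "finitely_supported v"
  shows "lincomb (u - v) = diff (lincomb u) (lincomb v)"
proof -
  have "lincomb (u - v) = lincomb (\<lambda>x. (-1) * v x + u x)"
    by (rule arg_cong[where f = lincomb]) (simp add: fun_eq_iff)
  also have "\<dots> = add (sc (-1) (lincomb v)) (lincomb u)"
    using lincomb_combine[OF assms(2,1), of "-1"] by simp
  also have "\<dots> = diff (lincomb u) (lincomb v)"
    using assms by (intro add_commute scale_closed lincomb_closed)
  finally show ?thesis .
qed

lemma finitely_supported_diff:
  assumes "finitely_supported u" "finitely_supported v"
  shows "finitely_supported (u - v)"
proof -
  have "u - v = (\<lambda>x. (-1) * v x + u x)"
    by (simp add: fun_eq_iff)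
  then show ?thesis
    using finitely_supported_combine[OF assms(2,1), of "-1"] by (simp only:)
qed

lemma finitely_supported_zero: "finitely_supported (\<lambda>_. 0)"
  and lincomb_zero: "lincomb (\<lambda>_. 0) = z"
  by (simp_all add: finitely_supported_def lincomb_def)

lemma support_indicator: "{y. indicator {x} y \<noteq> (0 :: real)} = {x}"
  by (auto simp: indicator_def)

lemma finitely_supported_indicator: "x \<in> carrier G \<Longrightarrow> finitely_supported (indicator {x})"
  by (simp add: finitely_supported_def support_indicator)

lemma lincomb_indicator: "x \<in> carrier G \<Longrightarrow> lincomb (indicator {x}) = w x"
  using lincomb_eq_finprod[of "{x}" "indicator {x}"] w_closed
  by (simp add: support_indicator scale_one add_group_laws)

lemma lincomb_hom_relation:
  assumes "g \<in> carrier G" "h \<in> carrier G"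
  shows "finitely_supported (indicator {g \<otimes>\<^bsub>G\<^esub> h} - indicator {g} - indicator {h})"
    and "lincomb (indicator {g \<otimes>\<^bsub>G\<^esub> h} - indicator {g} - indicator {h}) = defect g h"
proof -
  have eq: "indicator {g \<otimes>\<^bsub>G\<^esub> h} - indicator {g} - indicator {h}
      = indicator {g \<otimes>\<^bsub>G\<^esub> h} - indicator {h} - (indicator {g} :: 'g \<Rightarrow> real)"
    by simp
  show "finitely_supported (indicator {g \<otimes>\<^bsub>G\<^esub> h} - indicator {g} - indicator {h})"
    using assms by (simp add: finitely_supported_diff finitely_supported_indicator)
  show "lincomb (indicator {g \<otimes>\<^bsub>G\<^esub> h} - indicator {g} - indicator {h}) = defect g h"
    unfolding eq using assms
    by (simp add: lincomb_diff finitely_supported_diff finitely_supported_indicator lincomb_indicator)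
qed

lemma negligible_lincomb_span:
  assumes "t \<in> real_fun.span (hom_relations G)"
  shows "finitely_supported t \<and> negligible (lincomb t)"
  using assms
proof (induction rule: real_fun.span_induct_alt)
  case base
  show ?case
    by (simp add: finitely_supported_zero lincomb_zero negligible_zero)
next
  case (step c r t)
  then obtain g h where gh: "g \<in> carrier G" "h \<in> carrier G"
    and r: "r = indicator {g \<otimes>\<^bsub>G\<^esub> h} - indicator {g} - indicator {h}"
    unfolding hom_relations_def by blast
  then have "finitely_supported r" "negligible (lincomb r)"
    using lincomb_hom_relation negligible_defect by simp_all
  with step.IH show ?case
    by (simp add: finitely_supported_combine lincomb_combine negligible_combine lincomb_closed)
qed

lemma exists_generator_not_negligible:
  assumes "g \<in> carrier G" "w g \<noteq> z"
  shows "\<exists>s\<in>S. \<not> negligible (w s)"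
proof (rule ccontr)
  assume "\<not> ?thesis"
  define \<epsilon> :: real where "\<epsilon> = 1 / (card S + 1)"
  have "\<epsilon> > 0" "card S * \<epsilon> < 1"
    by (simp_all add: \<epsilon>_def field_simps)
  with \<open>\<not> ?thesis\<close> have "\<forall>\<^sub>F n in sequentially. \<forall>s\<in>S. N n (w s) \<le> \<epsilon> * generator_size n"
    unfolding negligible_def by (simp add: eventually_ball_finite finite_generators)
  moreover obtain K where "\<forall>\<^sub>F n in sequentially. N n (w g) \<le> K * generator_size n"
    using eventually_norm_le_generator_size[OF assms(1)] by blast
  ultimately obtain n where small: "\<forall>s\<in>S. N n (w s) \<le> \<epsilon> * generator_size n"
    and g_le: "N n (w g) \<le> K * generator_size n"
    using eventually_happens'[OF sequentially_bot eventually_conj] by blast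
  have "generator_size n = (\<Sum>s\<in>S. N n (w s))"
    by (simp add: generator_size_def)
  also have "\<dots> \<le> (\<Sum>s\<in>S. \<epsilon> * generator_size n)"
    using small by (intro sum_mono) blast
  finally have "generator_size n \<le> card S * \<epsilon> * generator_size n"
    by simp
  then have "generator_size n = 0"
    using \<open>card S * \<epsilon> < 1\<close> generator_size_nonneg[of n]
    by (metis mult_le_cancel_right1 not_less order.antisym)
  then have "N n (w g) \<le> 0"
    using g_le by simp
  then show False
    using assms normed.norm_pos[of "w g" n] w_closed by fastforce
qed

theorem exists_additive_map:
  assumes "g \<in> carrier G" "w g \<noteq> z"
  shows "\<exists>\<psi> :: 'g \<Rightarrow> real. (\<forall>x\<in>carrier G. \<forall>y\<in>carrier G. \<psi> (x \<otimes>\<^bsub>G\<^esub> y) = \<psi> x + \<psi> y)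
           \<and> (\<exists>x\<in>carrier G. \<psi> x \<noteq> 0)"
proof -
  obtain s where s: "s \<in> S" "\<not> negligible (w s)"
    using exists_generator_not_negligible[OF assms] by blast
  have "s \<in> carrier G"
    using s(1) generators_closed by blast
  moreover have "indicator {s} \<notin> real_fun.span (hom_relations G)"
  proof
    assume "indicator {s} \<in> real_fun.span (hom_relations G)"
    then have "negligible (lincomb (indicator {s}))"
      using negligible_lincomb_span by blast
    with s(2) show False
      using lincomb_indicator[OF \<open>s \<in> carrier G\<close>] by simp
  qed
  ultimately show ?thesis
    by (rule additive_map_if_not_in_span_hom_relations)
qed

end

lemma is_categoryD:
  assumes "is_category C" "a \<in> Obj C" "a' \<in> Obj C" "a'' \<in> Obj C"
  shows "idm C a \<in> Hom C a a"
    and "f \<in> Hom C a a' \<Longrightarrow> g \<in> Hom C a' a'' \<Longrightarrow> cmp C g f \<in> Hom C a a''"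
    and "f \<in> Hom C a a' \<Longrightarrow> cmp C f (idm C a) = f"
    and "f \<in> Hom C a a' \<Longrightarrow> cmp C (idm C a') f = f"
  using assms by (simp_all add: is_category_def)

lemma right_linear_categoryD:
  assumes "right_linear_category C" "a \<in> Obj C" "a' \<in> Obj C" "a'' \<in> Obj C"
  shows "is_category C"
    and "carrier_vector_space (Hom C a a') (addm C a a') (scalem C a a') (zerom C a a')"
    and "c \<in> Hom C a a' \<Longrightarrow> linear_map_on (Hom C a' a'') (addm C a' a'') (scalem C a' a'')
      (Hom C a a'') (addm C a a'') (scalem C a a'') (\<lambda>f. cmp C f c)"
  using assms by (simp_all add: right_linear_category_def carrier_vector_space_iff)

lemma banach_category_right_linear: "banach_category B NB \<Longrightarrow> right_linear_category B"
  by (simp add: banach_category_def linear_category_def)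

lemma banach_category_norm_zero:
  assumes "banach_category B NB" "b \<in> Obj B" "b' \<in> Obj B"
  shows "NB b b' (zerom B b b') = 0"
  using assms carrier_vector_space.zero_closed[OF right_linear_categoryD(2)[OF
      banach_category_right_linear[OF assms(1)] assms(2,3,3)]]
  unfolding banach_category_def norm_on_def by simp

lemma cmp_subm_right:
  assumes "right_linear_category C" "a \<in> Obj C" "a' \<in> Obj C" "a'' \<in> Obj C"
    and "x \<in> Hom C a' a''" "y \<in> Hom C a' a''" "c \<in> Hom C a a'"
  shows "cmp C (subm C a' a'' x y) c = subm C a a'' (cmp C x c) (cmp C y c)"
proof -
  interpret carrier_vector_space "Hom C a' a''" "addm C a' a''" "scalem C a' a''" "zerom C a' a''"
    using right_linear_categoryD(2)[OF assms(1,3,4,4)] .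
  show ?thesis
    using right_linear_categoryD(3)[OF assms(1-4,7)] assms(5,6)
    unfolding linear_map_on_def subm_def by (simp add: scale_closed)
qed

lemma linear_functor_subm:
  assumes "linear_functor C B Fo Fm" "right_linear_category C" "a \<in> Obj C" "a' \<in> Obj C"
    and "x \<in> Hom C a a'" "y \<in> Hom C a a'"
  shows "Fm (subm C a a' x y) = subm B (Fo a) (Fo a') (Fm x) (Fm y)"
proof -
  interpret carrier_vector_space "Hom C a a'" "addm C a a'" "scalem C a a'" "zerom C a a'"
    using right_linear_categoryD(2)[OF assms(2-4,4)] .
  have "linear_map_on (Hom C a a') (addm C a a') (scalem C a a')
      (Hom B (Fo a) (Fo a')) (addm B (Fo a) (Fo a')) (scalem B (Fo a) (Fo a')) Fm"
    using assms(1,3,4) by (simp add: linear_functor_def)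
  then show ?thesis
    using assms(5,6) unfolding linear_map_on_def subm_def by (simp add: scale_closed)
qed

lemma eventually_le_if_limsup_quotient_le_zero:
  fixes f g :: "nat \<Rightarrow> real"
  assumes "limsup (\<lambda>n. ereal (f n / g n)) \<le> ereal 0" "\<And>n. g n > 0" "\<epsilon> > 0"
  shows "\<forall>\<^sub>F n in sequentially. f n \<le> \<epsilon> * g n"
proof -
  have "limsup (\<lambda>n. ereal (f n / g n)) < ereal \<epsilon>"
    using assms(1,3) by (simp add: le_less_trans)
  then have "\<forall>\<^sub>F n in sequentially. f n / g n < \<epsilon>"
    using Limsup_lessD by fastforce
  then show ?thesis
    by eventually_elim (simp add: assms(2) pos_divide_less_eq less_imp_le mult.commute)
qed

lemma differential_kernel_eventually_contracts:
  assumes dc: "differential_category C Do Dm B NB"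
    and objs: "a \<in> Obj C" "a' \<in> Obj C" "a'' \<in> Obj C"
  obtains \<nu> where "\<And>n. n \<ge> 1 \<Longrightarrow>
      norm_on (Hom C a a') (addm C a a') (scalem C a a') (zerom C a a') (\<nu> n a a')"
    and "\<And>c c' c'' \<epsilon>. c \<in> Hom C a' a'' \<Longrightarrow> c' \<in> Hom C a a' \<Longrightarrow> c'' \<in> Hom C a a' \<Longrightarrow>
      Dm c = zerom B (Do a') (Do a'') \<Longrightarrow> \<epsilon> > 0 \<Longrightarrow>
      \<forall>\<^sub>F n in sequentially. \<nu> (Suc n) a a'' (subm C a a'' (cmp C c c') (cmp C c c''))
        \<le> \<epsilon> * \<nu> (Suc n) a a' (subm C a a' c' c'')"
proof -
  have C: "right_linear_category C" and B: "banach_category B NB" and D: "linear_functor C B Do Dm"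
    using dc by (simp_all add: differential_category_def)
  from dc[unfolded differential_category_def, THEN conjunct2, THEN conjunct2, THEN conjunct2]
  obtain \<nu> where norms_all: "\<forall>n\<ge>1. \<forall>a\<in>Obj C. \<forall>a'\<in>Obj C.
      norm_on (Hom C a a') (addm C a a') (scalem C a a') (zerom C a a') (\<nu> n a a')"
    and limsup_all: "\<forall>a\<in>Obj C. \<forall>a'\<in>Obj C. \<forall>a''\<in>Obj C. \<forall>c\<in>Hom C a' a''.
      \<forall>c'\<in>Hom C a a'. \<forall>c''\<in>Hom C a a'. c' \<noteq> c'' \<longrightarrow>
        limsup (\<lambda>n. ereal (\<nu> (Suc n) a a'' (subm C a a'' (cmp C c c') (cmp C c c''))
          / \<nu> (Suc n) a a' (subm C a a' c' c''))) \<le> ereal (NB (Do a') (Do a'') (Dm c))"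
    by (elim exE conjE) iprover
  have norms: "norm_on (Hom C a b) (addm C a b) (scalem C a b) (zerom C a b) (\<nu> n a b)"
    if "n \<ge> 1" "b \<in> Obj C" for n b
    using norms_all that objs(1) by blast
  interpret C': carrier_normed_space "Hom C a a'" "addm C a a'" "scalem C a a'" "zerom C a a'"
    "\<nu> (Suc n) a a'" for n
    using right_linear_categoryD(2)[OF C objs(1,2,2)] norms objs
    by (simp add: carrier_normed_space_def carrier_normed_space_axioms_def)
  interpret C'': carrier_normed_space "Hom C a a''" "addm C a a''" "scalem C a a''" "zerom C a a''"
    "\<nu> (Suc n) a a''" for n
    using right_linear_categoryD(2)[OF C objs(1,3,3)] norms objs
    by (simp add: carrier_normed_space_def carrier_normed_space_axioms_def)
  show thesis
  proof (rule that)
    show "norm_on (Hom C a a') (addm C a a') (scalem C a a') (zerom C a a') (\<nu> n a a')"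
      if "n \<ge> 1" for n
      using norms that objs(2) .
  next
    fix c c' c'' and \<epsilon> :: real
    assume homs: "c \<in> Hom C a' a''" "c' \<in> Hom C a a'" "c'' \<in> Hom C a a'"
      and Dc: "Dm c = zerom B (Do a') (Do a'')" and "\<epsilon> > 0"
    have cmp_closed: "cmp C c c' \<in> Hom C a a''" "cmp C c c'' \<in> Hom C a a''"
      using is_categoryD(2)[OF right_linear_categoryD(1)[OF C objs] objs homs(2,1)]
        is_categoryD(2)[OF right_linear_categoryD(1)[OF C objs] objs homs(3,1)] by simp_all
    show "\<forall>\<^sub>F n in sequentially. \<nu> (Suc n) a a'' (subm C a a'' (cmp C c c') (cmp C c c''))
        \<le> \<epsilon> * \<nu> (Suc n) a a' (subm C a a' c' c'')"
    proof (cases "c' = c''")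
      case True
      then show ?thesis
        using cmp_closed homs by (simp add: subm_def C'.diff_self C''.diff_self C'.norm_zero C''.norm_zero)
    next
      case False
      have "Do a' \<in> Obj B" "Do a'' \<in> Obj B"
        using D objs unfolding linear_functor_def by blast+
      then have "NB (Do a') (Do a'') (Dm c) = 0"
        using banach_category_norm_zero[OF B] Dc by simp
      moreover have "\<nu> (Suc n) a a' (subm C a a' c' c'') > 0" for n
        using False homs by (simp add: subm_def C'.norm_pos C'.diff_closed C'.diff_eq_zero_iff)
      moreover have "limsup (\<lambda>n. ereal (\<nu> (Suc n) a a'' (subm C a a'' (cmp C c c') (cmp C c c''))
          / \<nu> (Suc n) a a' (subm C a a' c' c''))) \<le> ereal (NB (Do a') (Do a'') (Dm c))"
        using limsup_all objs homs False by blast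
      ultimately show ?thesis
        using \<open>\<epsilon> > 0\<close> by (intro eventually_le_if_limsup_quotient_le_zero) simp_all
    qed
  qed
qed

lemma differential_subm_idm:
  assumes C: "right_linear_category C" and B: "banach_category B NB" and D: "linear_functor C B Do Dm"
    and a: "a \<in> Obj C" and x: "x \<in> Hom C a a" "Dm x = idm B (Do a)"
  shows "Dm (subm C a a x (idm C a)) = zerom B (Do a) (Do a)"
proof -
  have Da: "Do a \<in> Obj B"
    using D a by (simp add: linear_functor_def)
  interpret W: carrier_vector_space "Hom B (Do a) (Do a)" "addm B (Do a) (Do a)"
      "scalem B (Do a) (Do a)" "zerom B (Do a) (Do a)"
    using right_linear_categoryD(2)[OF banach_category_right_linear[OF B] Da Da Da] .
  have "Dm (idm C a) = idm B (Do a)"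
    using D a by (simp add: linear_functor_def)
  then show ?thesis
    using linear_functor_subm[OF D C a a x(1) is_categoryD(1)[OF right_linear_categoryD(1)[OF C a a a] a a a]]
      W.diff_self is_categoryD(1)[OF right_linear_categoryD(1)[OF banach_category_right_linear[OF B]
        Da Da Da] Da Da Da] x(2)
    by (simp add: subm_def)
qed

lemma representation_defect_eq:
  assumes C: "right_linear_category C" and R: "representation G C a R" and "group G"
    and gh: "g \<in> carrier G" "h \<in> carrier G"
  defines "w \<equiv> \<lambda>g. subm C a a (R g) (idm C a)"
  shows "subm C a a (subm C a a (w (g \<otimes>\<^bsub>G\<^esub> h)) (w h)) (w g)
    = subm C a a (cmp C (w g) (R h)) (cmp C (w g) (idm C a))"
proof -
  have a: "a \<in> Obj C" and RH: "\<And>g. g \<in> carrier G \<Longrightarrow> R g \<in> Hom C a a"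
    and R_mult: "R (g \<otimes>\<^bsub>G\<^esub> h) = cmp C (R g) (R h)"
    using R gh by (simp_all add: representation_def)
  interpret V: carrier_vector_space "Hom C a a" "addm C a a" "scalem C a a" "zerom C a a"
    using right_linear_categoryD(2)[OF C a a a] .
  note cat = is_categoryD[OF right_linear_categoryD(1)[OF C a a a] a a a]
  have "g \<otimes>\<^bsub>G\<^esub> h \<in> carrier G"
    using gh \<open>group G\<close> by (simp add: group.is_monoid monoid.m_closed)
  moreover have "cmp C (w g) (R h) = subm C a a (R (g \<otimes>\<^bsub>G\<^esub> h)) (R h)"
    using cmp_subm_right[OF C a a a RH[OF gh(1)] cat(1) RH[OF gh(2)]] R_mult cat(4) RH gh
    by (simp add: w_def)
  moreover have "cmp C (w g) (idm C a) = w g"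
    using cat(1,3) RH gh(1) by (simp add: w_def subm_def V.diff_closed)
  ultimately show ?thesis
    using gh RH cat(1) by (simp add: w_def subm_def V.diff_diff_diff_cancel)
qed

lemma representation_asymptotically_additive:
  assumes dc: "differential_category C Do Dm B NB"
    and R: "representation G C a R"
    and DR: "trivial_representation G B (Do a) (Dm \<circ> R)"
    and G: "group G" "finite S" "generate G S = carrier G"
  obtains N where "asymptotically_additive (Hom C a a) (addm C a a) (scalem C a a) (zerom C a a)
    N G S (\<lambda>g. subm C a a (R g) (idm C a))"
    and "\<And>g. g \<in> carrier G \<Longrightarrow> subm C a a (R g) (idm C a) = zerom C a a \<longleftrightarrow> R g = idm C a"
proof -
  have C: "right_linear_category C" and B: "banach_category B NB" and D: "linear_functor C B Do Dm"
    using dc by (simp_all add: differential_category_def)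
  have a: "a \<in> Obj C" and RH: "\<And>g. g \<in> carrier G \<Longrightarrow> R g \<in> Hom C a a"
    using R by (simp_all add: representation_def)
  interpret V: carrier_vector_space "Hom C a a" "addm C a a" "scalem C a a" "zerom C a a"
    using right_linear_categoryD(2)[OF C a a a] .
  have idm: "idm C a \<in> Hom C a a"
    using is_categoryD(1)[OF right_linear_categoryD(1)[OF C a a a] a a a] .
  obtain \<nu> where norms: "\<And>n. n \<ge> 1 \<Longrightarrow>
      norm_on (Hom C a a) (addm C a a) (scalem C a a) (zerom C a a) (\<nu> n a a)"
    and contracts: "\<And>c c' c'' \<epsilon>. c \<in> Hom C a a \<Longrightarrow> c' \<in> Hom C a a \<Longrightarrow> c'' \<in> Hom C a a \<Longrightarrow>
      Dm c = zerom B (Do a) (Do a) \<Longrightarrow> \<epsilon> > 0 \<Longrightarrow>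
      \<forall>\<^sub>F n in sequentially. \<nu> (Suc n) a a (subm C a a (cmp C c c') (cmp C c c''))
        \<le> \<epsilon> * \<nu> (Suc n) a a (subm C a a c' c'')"
    using differential_kernel_eventually_contracts[OF dc a a a] by blast
  let ?w = "\<lambda>g. subm C a a (R g) (idm C a)"
  have w_closed: "?w g \<in> Hom C a a" if "g \<in> carrier G" for g
    using that RH idm by (simp add: subm_def V.diff_closed)
  have D_w: "Dm (?w g) = zerom B (Do a) (Do a)" if "g \<in> carrier G" for g
    using differential_subm_idm[OF C B D a RH[OF that]] DR that
    by (simp add: trivial_representation_def)
  show thesis
  proof (rule that[OF asymptotically_additive.intro[OF V.carrier_vector_space_axioms]],
      rule asymptotically_additive_axioms.intro)
    show "?w g = zerom C a a \<longleftrightarrow> R g = idm C a" if "g \<in> carrier G" for g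
      using that RH idm by (simp add: subm_def V.diff_eq_zero_iff)
    show "norm_on (Hom C a a) (addm C a a) (scalem C a a) (zerom C a a) (\<nu> (Suc n) a a)" for n
      using norms by simp
    show "?w g \<in> Hom C a a" if "g \<in> carrier G" for g
      using w_closed that .
    show "\<forall>\<^sub>F n in sequentially. \<nu> (Suc n) a a (V.diff (V.diff (?w (g \<otimes>\<^bsub>G\<^esub> h)) (?w h)) (?w g))
        \<le> \<epsilon> * \<nu> (Suc n) a a (?w h)"
      if "g \<in> carrier G" "h \<in> carrier G" "\<epsilon> > 0" for g h and \<epsilon> :: real
      using contracts[OF w_closed RH idm D_w, of g h \<epsilon>] that
        representation_defect_eq[OF C R G(1), of g h]
      by (simp add: subm_def)
  qed (use G in simp_all)
qed

theorem theorem3p17: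
  fixes G :: "('g, 'x) monoid_scheme"
    and C :: "('o, 'm, 'f::real_normed_field) lincat"
    and Do :: "'o \<Rightarrow> 'p" and Dm :: "'m \<Rightarrow> 'n"
    and B :: "('p, 'n, 'f) lincat" and NB :: "'p \<Rightarrow> 'p \<Rightarrow> 'n \<Rightarrow> real"
    and a :: 'o and R :: "'g \<Rightarrow> 'm"
  assumes "finitely_generated_group G"
    and "differential_category C Do Dm B NB"
    and "representation G C a R"
  shows "trivial_representation G C a R
      \<or> \<not> trivial_representation G B (Do a) (Dm \<circ> R)
      \<or> (\<exists>\<phi> :: 'g \<Rightarrow> 'f. (\<forall>x\<in>carrier G. \<forall>y\<in>carrier G. \<phi> (x \<otimes>\<^bsub>G\<^esub> y) = \<phi> x + \<phi> y)
                         \<and> (\<exists>x\<in>carrier G. \<phi> x \<noteq> 0))"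
proof (cases "trivial_representation G C a R \<or> \<not> trivial_representation G B (Do a) (Dm \<circ> R)")
  case False
  then obtain g where g: "g \<in> carrier G" "R g \<noteq> idm C a"
    and DR: "trivial_representation G B (Do a) (Dm \<circ> R)"
    unfolding trivial_representation_def by blast
  obtain S where "group G" "finite S" "generate G S = carrier G"
    using assms(1) unfolding finitely_generated_group_def by blast
  then obtain N where aa: "asymptotically_additive (Hom C a a) (addm C a a) (scalem C a a) (zerom C a a)
      N G S (\<lambda>g. subm C a a (R g) (idm C a))"
    and "subm C a a (R g) (idm C a) \<noteq> zerom C a a"
    using representation_asymptotically_additive[OF assms(2,3) DR] g by metis
  then obtain \<psi> :: "'g \<Rightarrow> real" where "\<forall>x\<in>carrier G. \<forall>y\<in>carrier G. \<psi> (x \<otimes>\<^bsub>G\<^esub> y) = \<psi> x + \<psi> y"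
    "\<exists>x\<in>carrier G. \<psi> x \<noteq> 0"
    using asymptotically_additive.exists_additive_map[OF aa g(1)] by blast
  then show ?thesis
    by (intro disjI2 exI[of _ "\<lambda>x. of_real (\<psi> x)"]) simp
qed blast

end
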